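(* Let $N\geq 1$, let $U\in M_{2N}(\mathbb{C})$ be unitary with $U^{\rm T}=-U$, and let $\Phi^U_{4N}$ be the map defined on block matrices $X=\begin{pmatrix} X_{11} & X_{12}\\ X_{21} & X_{22}\end{pmatrix}$ ($X_{kl}\in M_{2N}(\mathbb{C})$) by $$\Phi^U_{4N}(X)=\frac{1}{2N}\begin{pmatrix} \mathbb{I}_{2N}\,\mathrm{Tr}X_{22} & -\big(X_{12}+UX_{21}^{\rm T}U^\dagger\big)\\ -\big(X_{21}+UX_{12}^{\rm T}U^\dagger\big) & \mathbb{I}_{2N}\,\mathrm{Tr}X_{11}\end{pmatrix}.$$ Let $W=(\mathrm{id}\otimes\Phi^U_{4N})P^+_{4N}$, where $P^+_{4N}=\frac{1}{4N}\sum_{k,l=1}^{4N}|k\rangle\langle l|\otimes|k\rangle\langle l|$. Then $W$ is an optimal entanglement witness: there is no nonzero positive semidefinite operator $A$ on $\mathbb{C}^{4N}\otimes\mathbb{C}^{4N}$ such that $W-A$ is block-positive (i.e. $\langle\psi\otimes\phi|(W-A)|\psi\otimes\phi\rangle\ge 0$ for all $\psi,\phi\in\mathbb{C}^{4N}$).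
   Context: $\{|k\rangle\}$ is the standard basis of $\mathbb{C}^{4N}$; $\mathrm{id}$ is the identity map on $M_{4N}(\mathbb{C})$. An entanglement witness is a block-positive operator that is not positive semidefinite; it is optimal if subtracting any nonzero positive semidefinite operator destroys block-positivity. *)

theory Defs
  imports Complex_Main "HOL-Library.Complex_Order"
begin

text \<open>Matrices are represented as functions nat => nat => complex, only entries with
  indices below the dimension being relevant. Operators on C^d (x) C^d are functions on
  index pairs (i,a), with i the index of the first factor and a of the second.\<close>

definition unitary_mat :: "nat \<Rightarrow> (nat \<Rightarrow> nat \<Rightarrow> complex) \<Rightarrow> bool" where
  "unitary_mat n U \<longleftrightarrow>
     (\<forall>i<n. \<forall>j<n. (\<Sum>k<n. cnj (U k i) * U k j) = (if i = j then 1 else 0)) \<and>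
     (\<forall>i<n. \<forall>j<n. (\<Sum>k<n. U i k * cnj (U j k)) = (if i = j then 1 else 0))"

definition antisymmetric_mat :: "nat \<Rightarrow> (nat \<Rightarrow> nat \<Rightarrow> complex) \<Rightarrow> bool" where
  "antisymmetric_mat n U \<longleftrightarrow> (\<forall>i<n. \<forall>j<n. U j i = - U i j)"

text \<open>The map Phi^U_{4N}, with block size n = 2N and d = 4N = 2n.
  (U X^T U^dagger)_{ac} = sum_{p,q} U_{ap} X_{qp} conj(U_{cq}).\<close>

definition PhiU :: "nat \<Rightarrow> (nat \<Rightarrow> nat \<Rightarrow> complex) \<Rightarrow> (nat \<Rightarrow> nat \<Rightarrow> complex) \<Rightarrow> nat \<Rightarrow> nat \<Rightarrow> complex" where
  "PhiU N U X a b =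
    (let n = 2 * N;
         X11 = (\<lambda>i j. X i j); X12 = (\<lambda>i j. X i (n + j));
         X21 = (\<lambda>i j. X (n + i) j); X22 = (\<lambda>i j. X (n + i) (n + j));
         conjT = (\<lambda>Y a c. \<Sum>p<n. \<Sum>q<n. U a p * Y q p * cnj (U c q))
     in (if a < n \<and> b < n then (if a = b then (\<Sum>i<n. X22 i i) else 0)
         else if a < n \<and> n \<le> b then - (X12 a (b - n) + conjT X21 a (b - n))
         else if n \<le> a \<and> b < n then - (X21 (a - n) b + conjT X12 (a - n) b)
         else (if a = b then (\<Sum>i<n. X11 i i) else 0)) / of_nat (2 * N))"

definition mat_unit :: "nat \<Rightarrow> nat \<Rightarrow> nat \<Rightarrow> nat \<Rightarrow> complex" where
  "mat_unit k l = (\<lambda>i j. if i = k \<and> j = l then 1 else 0)"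

text \<open>W = (id (x) Phi)(P^+) with P^+ = 1/(4N) sum_{k,l} |k><l| (x) |k><l|, so
  W((i,a),(j,b)) = Phi(|i><j|)_{ab} / (4N).\<close>
definition W_op :: "nat \<Rightarrow> (nat \<Rightarrow> nat \<Rightarrow> complex) \<Rightarrow> nat \<times> nat \<Rightarrow> nat \<times> nat \<Rightarrow> complex" where
  "W_op N U = (\<lambda>(i, a) (j, b). PhiU N U (mat_unit i j) a b / of_nat (4 * N))"

definition block_positive :: "nat \<Rightarrow> (nat \<times> nat \<Rightarrow> nat \<times> nat \<Rightarrow> complex) \<Rightarrow> bool" where
  "block_positive d M \<longleftrightarrow>
     (\<forall>\<psi> \<phi> :: nat \<Rightarrow> complex.
        0 \<le> (\<Sum>i<d. \<Sum>a<d. \<Sum>j<d. \<Sum>b<d.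
               cnj (\<psi> i * \<phi> a) * M (i, a) (j, b) * (\<psi> j * \<phi> b)))"

definition psd_op :: "nat \<Rightarrow> (nat \<times> nat \<Rightarrow> nat \<times> nat \<Rightarrow> complex) \<Rightarrow> bool" where
  "psd_op d A \<longleftrightarrow>
     (\<forall>x \<in> {..<d} \<times> {..<d}. \<forall>y \<in> {..<d} \<times> {..<d}. A y x = cnj (A x y)) \<and>
     (\<forall>v :: nat \<times> nat \<Rightarrow> complex.
        0 \<le> (\<Sum>x \<in> {..<d} \<times> {..<d}. \<Sum>y \<in> {..<d} \<times> {..<d}. cnj (v x) * A x y * v y))"

definition nonzero_op :: "nat \<Rightarrow> (nat \<times> nat \<Rightarrow> nat \<times> nat \<Rightarrow> complex) \<Rightarrow> bool" where
  "nonzero_op d A \<longleftrightarrow> (\<exists>x \<in> {..<d} \<times> {..<d}. \<exists>y \<in> {..<d} \<times> {..<d}. A x y \<noteq> 0)"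

definition entanglement_witness :: "nat \<Rightarrow> (nat \<times> nat \<Rightarrow> nat \<times> nat \<Rightarrow> complex) \<Rightarrow> bool" where
  "entanglement_witness d W \<longleftrightarrow> block_positive d W \<and> \<not> psd_op d W"

definition optimal_entanglement_witness :: "nat \<Rightarrow> (nat \<times> nat \<Rightarrow> nat \<times> nat \<Rightarrow> complex) \<Rightarrow> bool" where
  "optimal_entanglement_witness d W \<longleftrightarrow>
     entanglement_witness d W \<and>
     \<not> (\<exists>A. psd_op d A \<and> nonzero_op d A \<and> block_positive d (\<lambda>x y. W x y - A x y))"

end

theory Submission
  imports Defs
begin

text \<open>Split \<open>\<psi> = (\<psi>\<^sub>1, \<psi>\<^sub>2)\<close> and \<open>\<phi> = (\<phi>\<^sub>1, \<phi>\<^sub>2)\<close> into halves of length \<open>2N\<close>. Up to a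
  positive factor, \<open>\<langle>\<psi>\<otimes>\<phi>|W|\<psi>\<otimes>\<phi>\<rangle>\<close> equals
  \<open>\<parallel>\<phi>\<^sub>1\<parallel>\<^sup>2\<parallel>\<psi>\<^sub>2\<parallel>\<^sup>2 + \<parallel>\<phi>\<^sub>2\<parallel>\<^sup>2\<parallel>\<psi>\<^sub>1\<parallel>\<^sup>2 - 2 Re (\<langle>\<phi>\<^sub>1,\<psi>\<^sub>1\<^sup>*\<rangle>\<langle>\<psi>\<^sub>2\<^sup>*,\<phi>\<^sub>2\<rangle> + \<langle>\<phi>\<^sub>1,U\<psi>\<^sub>1\<rangle>\<langle>U\<psi>\<^sub>2,\<phi>\<^sub>2\<rangle>)\<close>.
  Antisymmetry of \<open>U\<close> makes \<open>U\<psi>\<^sub>k\<close> orthogonal to \<open>\<psi>\<^sub>k\<^sup>*\<close> and unitarity gives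
  \<open>\<parallel>U\<psi>\<^sub>k\<parallel> = \<parallel>\<psi>\<^sub>k\<parallel>\<close>, so Bessel's inequality, Cauchy-Schwarz and AM-GM make this nonnegative,
  and it vanishes for \<open>\<phi> = \<psi>\<^sup>*\<close>. Hence if \<open>A \<ge> 0\<close> and \<open>W - A\<close> is block-positive, the form of
  \<open>A\<close> vanishes at every \<open>\<psi> \<otimes> \<psi>\<^sup>*\<close>, these vectors lie in the kernel of \<open>A\<close>, and since they
  span the whole space, \<open>A = 0\<close>.\<close>

definition cinner :: "'a set \<Rightarrow> ('a \<Rightarrow> complex) \<Rightarrow> ('a \<Rightarrow> complex) \<Rightarrow> complex" where
  "cinner R u v = (\<Sum>a\<in>R. cnj (u a) * v a)"

definition sqnorm :: "'a set \<Rightarrow> ('a \<Rightarrow> complex) \<Rightarrow> real" where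
  "sqnorm R u = (\<Sum>a\<in>R. (cmod (u a))\<^sup>2)"

lemma cnj_cinner: "cnj (cinner R u v) = cinner R v u"
  unfolding cinner_def by (simp add: mult.commute)

lemma cmod_cinner_commute: "cmod (cinner R u v) = cmod (cinner R v u)"
  by (metis cnj_cinner complex_mod_cnj)

lemma cinner_self: "cinner R u u = of_real (sqnorm R u)"
  unfolding cinner_def sqnorm_def of_real_sum
  by (intro sum.cong refl) (metis complex_norm_square mult.commute)

lemma sqnorm_nonneg: "0 \<le> sqnorm R u"
  unfolding sqnorm_def by (simp add: sum_nonneg)

lemma sqnorm_cnj: "sqnorm R (\<lambda>a. cnj (u a)) = sqnorm R u"
  unfolding sqnorm_def by simp

lemma sqnorm_eq_0D: "finite R \<Longrightarrow> sqnorm R u = 0 \<Longrightarrow> a \<in> R \<Longrightarrow> u a = 0"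
  unfolding sqnorm_def by (simp add: sum_nonneg_eq_0_iff)

lemma cinner_diff_left: "cinner R (\<lambda>a. u a - v a) w = cinner R u w - cinner R v w"
  unfolding cinner_def by (simp add: left_diff_distrib sum_subtractf)

lemma cinner_diff_right: "cinner R w (\<lambda>a. u a - v a) = cinner R w u - cinner R w v"
  unfolding cinner_def by (simp add: right_diff_distrib sum_subtractf)

lemma cinner_scale_left: "cinner R (\<lambda>a. c * u a) w = cnj c * cinner R u w"
  unfolding cinner_def by (simp add: sum_distrib_left algebra_simps)

lemma cinner_scale_right: "cinner R w (\<lambda>a. c * u a) = c * cinner R w u"
  unfolding cinner_def by (simp add: sum_distrib_left algebra_simps)

lemma cinner_cong_left: "(\<And>x. x \<in> R \<Longrightarrow> u x = u' x) \<Longrightarrow> cinner R u v = cinner R u' v"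
  unfolding cinner_def by simp

lemma bessel_inequality_pair:
  assumes "finite R" and orth: "cinner R x x' = 0" and eq: "sqnorm R x' = sqnorm R x"
  shows "(cmod (cinner R x f))\<^sup>2 + (cmod (cinner R x' f))\<^sup>2 \<le> sqnorm R x * sqnorm R f"
proof (cases "sqnorm R x = 0")
  case True
  then have "cinner R x f = 0" "cinner R x' f = 0"
    using sqnorm_eq_0D[OF \<open>finite R\<close>] eq unfolding cinner_def by (auto intro: sum.neutral)
  then show ?thesis by (simp add: sqnorm_nonneg)
next
  case False
  define s where "s = sqnorm R x"
  define a where "a = cinner R x f"
  define b where "b = cinner R x' f"
  define w where "w = (\<lambda>k. complex_of_real s * f k - a * x k - b * x' k)"
  have "s > 0" using False sqnorm_nonneg[of R x] s_def by auto
  have orth': "cinner R x' x = 0" using orth cnj_cinner[of R x x'] by simp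
  have fx: "cinner R f x = cnj a" and fx': "cinner R f x' = cnj b"
    unfolding a_def b_def by (simp_all add: cnj_cinner)
  have "cinner R w w = s * (s * sqnorm R f - a * cnj a - b * cnj b)"
    unfolding w_def
    by (simp add: cinner_diff_left cinner_diff_right cinner_scale_left cinner_scale_right
        orth orth' fx fx' cinner_self eq a_def[symmetric] b_def[symmetric] s_def[symmetric])
      (simp add: algebra_simps)
  also have "\<dots> = of_real (s * (s * sqnorm R f - (cmod a)\<^sup>2 - (cmod b)\<^sup>2))"
    by (simp flip: complex_norm_square)
  finally have "0 \<le> s * (s * sqnorm R f - (cmod a)\<^sup>2 - (cmod b)\<^sup>2)"
    by (metis cinner_self of_real_eq_iff sqnorm_nonneg)
  with \<open>s > 0\<close> show ?thesis
    unfolding a_def b_def s_def by (simp add: zero_le_mult_iff)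
qed

lemma cmod_add_mult_square_le:
  "(cmod (a * b + c * d))\<^sup>2 \<le> ((cmod a)\<^sup>2 + (cmod c)\<^sup>2) * ((cmod b)\<^sup>2 + (cmod d)\<^sup>2)"
proof -
  have "(cmod (a * b + c * d))\<^sup>2 \<le> (cmod a * cmod b + cmod c * cmod d)\<^sup>2"
    by (simp add: power_mono norm_triangle_le norm_mult)
  also have "\<dots> = ((cmod a)\<^sup>2 + (cmod c)\<^sup>2) * ((cmod b)\<^sup>2 + (cmod d)\<^sup>2) - (cmod a * cmod d - cmod c * cmod b)\<^sup>2"
    by algebra
  finally show ?thesis
    using zero_le_power2[of "cmod a * cmod d - cmod c * cmod b"] by linarith
qed

lemma two_Re_cross_term_le:
  assumes "finite R"
    and "cinner R x u = 0" "sqnorm R u = sqnorm R x"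
    and "cinner R y v = 0" "sqnorm R v = sqnorm R y"
  shows "2 * Re (cinner R f x * cinner R y g + cinner R f u * cinner R v g)
    \<le> sqnorm R f * sqnorm R y + sqnorm R g * sqnorm R x"
proof -
  let ?T = "cinner R f x * cinner R y g + cinner R f u * cinner R v g"
  have "(cmod ?T)\<^sup>2 \<le> ((cmod (cinner R x f))\<^sup>2 + (cmod (cinner R u f))\<^sup>2) *
      ((cmod (cinner R y g))\<^sup>2 + (cmod (cinner R v g))\<^sup>2)"
    using cmod_add_mult_square_le[of "cinner R f x" "cinner R y g" "cinner R f u" "cinner R v g"]
    by (simp add: cmod_cinner_commute[of R f x] cmod_cinner_commute[of R f u])
  also have "\<dots> \<le> (sqnorm R x * sqnorm R f) * (sqnorm R y * sqnorm R g)"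
    using assms by (intro mult_mono bessel_inequality_pair) (simp_all add: sqnorm_nonneg add_nonneg_nonneg)
  finally have "(cmod ?T)\<^sup>2 \<le> (sqnorm R f * sqnorm R y) * (sqnorm R g * sqnorm R x)"
    by (simp add: mult_ac)
  have "Re ?T \<le> cmod ?T"
    by (rule complex_Re_le_cmod)
  also have "\<dots> \<le> sqrt ((sqnorm R f * sqnorm R y) * (sqnorm R g * sqnorm R x))"
    by (rule real_le_rsqrt) fact
  also have "\<dots> \<le> (sqnorm R f * sqnorm R y + sqnorm R g * sqnorm R x) / 2"
    by (intro arith_geo_mean_sqrt) (simp_all add: sqnorm_nonneg)
  finally show ?thesis by simp
qed

definition mat_vec :: "'a set \<Rightarrow> ('a \<Rightarrow> 'a \<Rightarrow> complex) \<Rightarrow> ('a \<Rightarrow> complex) \<Rightarrow> 'a \<Rightarrow> complex" where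
  "mat_vec R A v = (\<lambda>x. \<Sum>y\<in>R. A x y * v y)"

definition mat_adjoint :: "('a \<Rightarrow> 'a \<Rightarrow> complex) \<Rightarrow> 'a \<Rightarrow> 'a \<Rightarrow> complex" where
  "mat_adjoint A = (\<lambda>x y. cnj (A y x))"

definition hermitian_on :: "'a set \<Rightarrow> ('a \<Rightarrow> 'a \<Rightarrow> complex) \<Rightarrow> bool" where
  "hermitian_on R A \<longleftrightarrow> (\<forall>x\<in>R. \<forall>y\<in>R. A y x = cnj (A x y))"

lemma mat_vec_add: "mat_vec R A (\<lambda>y. u y + v y) = (\<lambda>x. mat_vec R A u x + mat_vec R A v x)"
  unfolding mat_vec_def by (simp add: distrib_left sum.distrib)

lemma mat_vec_diff: "mat_vec R A (\<lambda>y. u y - v y) = (\<lambda>x. mat_vec R A u x - mat_vec R A v x)"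
  unfolding mat_vec_def by (simp add: right_diff_distrib sum_subtractf)

lemma mat_vec_scale: "mat_vec R A (\<lambda>y. c * u y) = (\<lambda>x. c * mat_vec R A u x)"
  unfolding mat_vec_def by (simp add: sum_distrib_left mult_ac)

lemma cinner_mat_vec_adjoint:
  "cinner R u (mat_vec R A v) = cinner R (mat_vec R (mat_adjoint A) u) v"
proof -
  have "cinner R u (mat_vec R A v) = (\<Sum>x\<in>R. \<Sum>y\<in>R. cnj (u x) * A x y * v y)"
    unfolding cinner_def mat_vec_def by (simp add: sum_distrib_left mult.assoc)
  also have "\<dots> = (\<Sum>y\<in>R. \<Sum>x\<in>R. cnj (mat_adjoint A y x * u x) * v y)"
    unfolding mat_adjoint_def by (subst sum.swap) (simp add: mult_ac)
  also have "\<dots> = cinner R (mat_vec R (mat_adjoint A) u) v"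
    unfolding cinner_def mat_vec_def by (simp add: sum_distrib_right)
  finally show ?thesis .
qed

lemma cinner_mat_vec_hermitian:
  assumes "hermitian_on R A"
  shows "cinner R u (mat_vec R A v) = cinner R (mat_vec R A u) v"
  unfolding cinner_mat_vec_adjoint
proof (rule cinner_cong_left)
  fix x assume "x \<in> R"
  then show "mat_vec R (mat_adjoint A) u x = mat_vec R A u x"
    using assms unfolding hermitian_on_def mat_adjoint_def mat_vec_def by (metis (no_types, lifting) sum.cong)
qed

lemma nonpos_if_quadratic_nonneg:
  fixes c s :: real
  assumes "0 \<le> c" and "\<And>r. 0 < r \<Longrightarrow> 0 \<le> r\<^sup>2 * c - 2 * r * s"
  shows "s \<le> 0"
proof (rule ccontr)
  assume "\<not> s \<le> 0"
  define r where "r = s / (c + 1)"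
  have "r > 0" unfolding r_def using \<open>\<not> s \<le> 0\<close> \<open>0 \<le> c\<close> by simp
  have "r * c \<le> s"
    using \<open>\<not> s \<le> 0\<close> \<open>0 \<le> c\<close> unfolding r_def by (simp add: field_simps)
  then have "r * (r * c) < r * (2 * s)"
    using \<open>r > 0\<close> \<open>\<not> s \<le> 0\<close> by (intro mult_strict_left_mono) simp_all
  moreover have "r\<^sup>2 * c - 2 * r * s = r * (r * c) - r * (2 * s)"
    by (simp add: power2_eq_square algebra_simps)
  ultimately show False
    using assms(2)[OF \<open>r > 0\<close>] by linarith
qed

text \<open>If the positive form vanishes at \<open>z\<close>, then \<open>A z = 0\<close>: otherwise moving \<open>z\<close> slightly
  in the direction \<open>-A z\<close> would make the form negative.\<close>

lemma mat_vec_eq_0_if_form_eq_0: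
  assumes "finite R" and herm: "hermitian_on R A"
    and pos: "\<And>v. 0 \<le> cinner R v (mat_vec R A v)"
    and z: "cinner R z (mat_vec R A z) = 0" and "x \<in> R"
  shows "mat_vec R A z x = 0"
proof -
  define w where "w = mat_vec R A z"
  define c where "c = Re (cinner R w (mat_vec R A w))"
  have zw: "cinner R z (mat_vec R A w) = of_real (sqnorm R w)"
    using cinner_mat_vec_hermitian[OF herm] by (simp add: w_def cinner_self)
  have wz: "cinner R w (mat_vec R A z) = of_real (sqnorm R w)"
    by (simp add: w_def cinner_self)
  have "0 \<le> r\<^sup>2 * c - 2 * r * sqnorm R w" for r :: real
  proof -
    have "0 \<le> Re (cinner R (\<lambda>k. z k - r * w k) (mat_vec R A (\<lambda>k. z k - r * w k)))"
      using pos by (simp add: less_eq_complex_def)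
    also have "\<dots> = r\<^sup>2 * c - 2 * r * sqnorm R w"
      by (simp add: mat_vec_diff mat_vec_scale cinner_diff_left cinner_diff_right
          cinner_scale_left cinner_scale_right z zw wz c_def power2_eq_square algebra_simps)
    finally show ?thesis .
  qed
  moreover have "0 \<le> c"
    using pos unfolding c_def by (simp add: less_eq_complex_def)
  ultimately have "sqnorm R w \<le> 0"
    using nonpos_if_quadratic_nonneg by blast
  then have "sqnorm R w = 0"
    using sqnorm_nonneg[of R w] by linarith
  then show ?thesis
    using sqnorm_eq_0D[OF \<open>finite R\<close>] \<open>x \<in> R\<close> unfolding w_def by blast
qed

text \<open>By polarization, the vectors \<open>\<psi> \<otimes> conj \<psi>\<close> span \<open>\<complex>\<^sup>I \<otimes> \<complex>\<^sup>I\<close>.\<close>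

lemma entry_eq_0_if_mat_vec_conj_products_eq_0:
  fixes A :: "'a \<times> 'a \<Rightarrow> 'a \<times> 'a \<Rightarrow> complex"
  assumes "finite I" and "j \<in> I" "b \<in> I"
    and zero: "\<And>\<psi>. mat_vec (I \<times> I) A (\<lambda>(i, a). \<psi> i * cnj (\<psi> a)) x = 0"
  shows "A x (j, b) = 0"
proof -
  define e where "e t k = (if k = t then 1 else 0 :: complex)" for t k :: 'a
  define Z where "Z \<psi> = (\<lambda>(i, a). \<psi> i * cnj (\<psi> a :: complex))" for \<psi> :: "'a \<Rightarrow> complex"
  have polarization: "(\<lambda>y. 2 * (if y = (j, b) then 1 else 0)) =
      (\<lambda>y. Z (\<lambda>k. e j k + e b k) y - Z (e j) y - Z (e b) y +
        \<i> * (Z (\<lambda>k. e j k + \<i> * e b k) y - Z (e j) y - Z (e b) y))"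
    unfolding Z_def e_def by (auto simp: fun_eq_iff algebra_simps)
  then have "2 * A x (j, b) = mat_vec (I \<times> I) A (\<lambda>y. Z (\<lambda>k. e j k + e b k) y - Z (e j) y - Z (e b) y +
        \<i> * (Z (\<lambda>k. e j k + \<i> * e b k) y - Z (e j) y - Z (e b) y)) x"
    using assms(1-3) by (simp add: mat_vec_def if_distrib[of "\<lambda>t. _ * (2 * t)"] sum.delta cong: if_cong
        flip: polarization)
  also have "\<dots> = 0"
    using zero unfolding Z_def[symmetric] by (simp only: mat_vec_add mat_vec_diff mat_vec_scale) simp
  finally show ?thesis by simp
qed

definition prod_expect :: "nat \<Rightarrow> (nat \<times> nat \<Rightarrow> nat \<times> nat \<Rightarrow> complex) \<Rightarrow> (nat \<Rightarrow> complex) \<Rightarrow> (nat \<Rightarrow> complex) \<Rightarrow> complex" where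
  "prod_expect d M \<psi> \<phi> =
     (\<Sum>i<d. \<Sum>a<d. \<Sum>j<d. \<Sum>b<d. cnj (\<psi> i * \<phi> a) * M (i, a) (j, b) * (\<psi> j * \<phi> b))"

lemma block_positive_iff: "block_positive d M \<longleftrightarrow> (\<forall>\<psi> \<phi>. 0 \<le> prod_expect d M \<psi> \<phi>)"
  unfolding block_positive_def prod_expect_def ..

lemma prod_expect_diff:
  "prod_expect d (\<lambda>x y. M x y - A x y) \<psi> \<phi> = prod_expect d M \<psi> \<phi> - prod_expect d A \<psi> \<phi>"
  unfolding prod_expect_def by (simp add: algebra_simps sum_subtractf)

lemma psd_op_iff:
  "psd_op d A \<longleftrightarrow> hermitian_on ({..<d} \<times> {..<d}) A \<and>
     (\<forall>v. 0 \<le> cinner ({..<d} \<times> {..<d}) v (mat_vec ({..<d} \<times> {..<d}) A v))"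
  unfolding psd_op_def hermitian_on_def cinner_def mat_vec_def by (simp add: sum_distrib_left mult.assoc)

lemma cinner_mat_vec_tensor:
  "cinner ({..<d} \<times> {..<d}) (\<lambda>(i, a). \<psi> i * \<phi> a) (mat_vec ({..<d} \<times> {..<d}) M (\<lambda>(i, a). \<psi> i * \<phi> a))
    = prod_expect d M \<psi> \<phi>"
proof -
  have split: "(\<Sum>x\<in>{..<d} \<times> {..<d}. f x) = (\<Sum>i<d. \<Sum>a<d. f (i, a))" for f :: "nat \<times> nat \<Rightarrow> complex"
    by (simp add: sum.cartesian_product)
  show ?thesis
    unfolding cinner_def mat_vec_def prod_expect_def
    by (simp only: split) (simp add: sum_distrib_left mult_ac)
qed

lemma psd_op_eq_0_if_conj_products_nonpos:
  assumes "psd_op d A" and nonpos: "\<And>\<psi>. prod_expect d A \<psi> (\<lambda>a. cnj (\<psi> a)) \<le> 0"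
  shows "\<not> nonzero_op d A"
proof -
  let ?R = "{..<d} \<times> {..<d}"
  have herm: "hermitian_on ?R A" and pos: "\<And>v. 0 \<le> cinner ?R v (mat_vec ?R A v)"
    using assms(1) unfolding psd_op_iff by blast+
  have kernel: "mat_vec ?R A (\<lambda>(i, a). \<psi> i * cnj (\<psi> a)) x = 0" if "x \<in> ?R" for x \<psi>
  proof (rule mat_vec_eq_0_if_form_eq_0[OF _ herm pos _ that])
    show "cinner ?R (\<lambda>(i, a). \<psi> i * cnj (\<psi> a)) (mat_vec ?R A (\<lambda>(i, a). \<psi> i * cnj (\<psi> a))) = 0"
      using nonpos pos[of "\<lambda>(i, a). \<psi> i * cnj (\<psi> a)"]
      unfolding cinner_mat_vec_tensor by (rule order.antisym)
  qed simp
  have "A x (j, b) = 0" if "x \<in> ?R" "j < d" "b < d" for x j b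
    using entry_eq_0_if_mat_vec_conj_products_eq_0[of "{..<d}" j b A x] kernel that by simp
  then show ?thesis
    unfolding nonzero_op_def by fast
qed

lemma PhiU_add: "PhiU N U (\<lambda>p q. X p q + Y p q) a b = PhiU N U X a b + PhiU N U Y a b"
proof -
  have "(\<Sum>p<2*N. \<Sum>q<2*N. U a p * (f q p + g q p) * cnj (U c q)) =
      (\<Sum>p<2*N. \<Sum>q<2*N. U a p * f q p * cnj (U c q)) + (\<Sum>p<2*N. \<Sum>q<2*N. U a p * g q p * cnj (U c q))"
    for a c f g
    by (simp add: sum.distrib algebra_simps)
  then show ?thesis
    unfolding PhiU_def Let_def
    by (cases "a < 2*N"; cases "b < 2*N") (simp_all add: sum.distrib add_divide_distrib diff_divide_distrib)
qed

lemma PhiU_scale: "PhiU N U (\<lambda>p q. c * X p q) a b = c * PhiU N U X a b"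
proof -
  have "(\<Sum>p<2*N. \<Sum>q<2*N. U a p * (c * f q p) * cnj (U d q)) =
      c * (\<Sum>p<2*N. \<Sum>q<2*N. U a p * f q p * cnj (U d q))" for a d f
    by (simp add: sum_distrib_left mult.assoc mult.left_commute)
  then show ?thesis
    unfolding PhiU_def Let_def
    by (cases "a < 2*N"; cases "b < 2*N") (simp_all add: sum_distrib_left[symmetric] distrib_left right_diff_distrib)
qed

lemma PhiU_sum:
  assumes "finite K"
  shows "PhiU N U (\<lambda>p q. \<Sum>k\<in>K. X k p q) a b = (\<Sum>k\<in>K. PhiU N U (X k) a b)"
  using assms
proof (induction K rule: finite_induct)
  case empty
  then show ?case by (simp add: PhiU_def Let_def)
next
  case (insert k K)
  then show ?case by (simp add: PhiU_add)
qed

lemma PhiU_cong: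
  assumes "a < 4*N" "b < 4*N" "\<And>p q. p < 4*N \<Longrightarrow> q < 4*N \<Longrightarrow> X p q = Y p q"
  shows "PhiU N U X a b = PhiU N U Y a b"
  using assms unfolding PhiU_def Let_def by (auto intro!: sum.cong)

lemma sum_sum_delta:
  assumes "finite A" "finite B" "p \<in> A" "q \<in> B"
  shows "(\<Sum>i\<in>A. \<Sum>j\<in>B. if p = i \<and> q = j then g i j else 0) = (g p q :: 'a::comm_monoid_add)"
proof -
  have "(\<Sum>j\<in>B. if p = i \<and> q = j then g i j else 0) = (if p = i then g i q else 0)" for i
    using assms by (cases "p = i") simp_all
  then show ?thesis using assms by simp
qed

lemma PhiU_rank_one:
  assumes "a < 4*N" "b < 4*N"
  shows "(\<Sum>i<4*N. \<Sum>j<4*N. cnj (\<psi> i) * \<psi> j * PhiU N U (mat_unit i j) a b)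
       = PhiU N U (\<lambda>p q. cnj (\<psi> p) * \<psi> q) a b"
proof -
  have "(\<Sum>i<4*N. \<Sum>j<4*N. cnj (\<psi> i) * \<psi> j * PhiU N U (mat_unit i j) a b)
     = PhiU N U (\<lambda>p q. \<Sum>i<4*N. \<Sum>j<4*N. cnj (\<psi> i) * \<psi> j * mat_unit i j p q) a b"
    by (simp add: PhiU_sum PhiU_scale)
  also have "\<dots> = PhiU N U (\<lambda>p q. cnj (\<psi> p) * \<psi> q) a b"
    using assms by (intro PhiU_cong) (simp_all add: mat_unit_def if_distrib[of "\<lambda>x. _ * x"] sum_sum_delta cong: if_cong)
  finally show ?thesis .
qed

lemma prod_expect_W_op:
  "prod_expect (4*N) (W_op N U) \<psi> \<phi> =
     (\<Sum>a<4*N. \<Sum>b<4*N. cnj (\<phi> a) * \<phi> b * PhiU N U (\<lambda>p q. cnj (\<psi> p) * \<psi> q) a b) / of_nat (4*N)"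
proof -
  have "prod_expect (4*N) (W_op N U) \<psi> \<phi> = (\<Sum>a<4*N. \<Sum>b<4*N. \<Sum>i<4*N. \<Sum>j<4*N.
      cnj (\<phi> a) * \<phi> b * (cnj (\<psi> i) * \<psi> j * PhiU N U (mat_unit i j) a b) / of_nat (4*N))"
    unfolding prod_expect_def W_op_def
    by (subst sum.swap, subst (2) sum.swap, rule sum.cong[OF refl], subst (2) sum.swap)
      (simp add: mult_ac)
  also have "\<dots> = (\<Sum>a<4*N. \<Sum>b<4*N. cnj (\<phi> a) * \<phi> b *
      PhiU N U (\<lambda>p q. cnj (\<psi> p) * \<psi> q) a b / of_nat (4*N))"
    by (simp add: PhiU_rank_one flip: sum_distrib_left sum_divide_distrib)
  finally show ?thesis by (simp add: sum_divide_distrib)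
qed

lemma mat_vec_mult_cnj:
  "mat_vec {..<n} U v a * cnj (mat_vec {..<n} U w c) = (\<Sum>p<n. \<Sum>q<n. U a p * (cnj (w q) * v p) * cnj (U c q))"
  unfolding mat_vec_def by (simp add: sum_product mult_ac)

lemma PhiU_rank_one_blocks:
  fixes N :: nat and \<psi> :: "nat \<Rightarrow> complex"
  defines "n \<equiv> 2 * N" and "X \<equiv> \<lambda>p q. cnj (\<psi> p) * \<psi> q"
  assumes "a < n" "b < n"
  shows "PhiU N U X a b = (if a = b then cinner {..<n} (\<lambda>c. \<psi> (n + c)) (\<lambda>c. \<psi> (n + c)) else 0) / of_nat n"
    and "PhiU N U X (n + a) (n + b) = (if a = b then cinner {..<n} \<psi> \<psi> else 0) / of_nat n"
    and "PhiU N U X a (n + b) = - (cnj (\<psi> a) * \<psi> (n + b)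
           + mat_vec {..<n} U \<psi> a * cnj (mat_vec {..<n} U (\<lambda>c. \<psi> (n + c)) b)) / of_nat n"
    and "PhiU N U X (n + a) b = - (cnj (\<psi> (n + a)) * \<psi> b
           + mat_vec {..<n} U (\<lambda>c. \<psi> (n + c)) a * cnj (mat_vec {..<n} U \<psi> b)) / of_nat n"
  using assms unfolding PhiU_def Let_def cinner_def by (simp_all add: mat_vec_mult_cnj)

lemma sum_sum_diagonal:
  assumes "finite A"
  shows "(\<Sum>a\<in>A. \<Sum>b\<in>A. cnj (f a) * f b * ((if a = b then s else 0) / k)) = cinner A f f * s / k"
proof -
  have "cnj (f a) * f b * ((if a = b then s else 0) / k) = (if b = a then cnj (f a) * f a * s / k else 0)" for a b
    by simp
  with assms show ?thesis
    unfolding cinner_def by (simp add: sum_distrib_right sum_divide_distrib)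
qed

lemma sum_sum_rank_two:
  "(\<Sum>a\<in>A. \<Sum>c\<in>C. cnj (f a) * g c * (- (x a * cnj (y c) + x' a * cnj (y' c)) / k))
    = - (cinner A f x * cinner C y g + cinner A f x' * cinner C y' g) / k"
proof -
  have "cinner A f x * cinner C y g + cinner A f x' * cinner C y' g
      = (\<Sum>a\<in>A. \<Sum>c\<in>C. cnj (f a) * g c * (x a * cnj (y c) + x' a * cnj (y' c)))"
    unfolding cinner_def sum_product by (simp add: sum.distrib[symmetric] algebra_simps)
  moreover have "cnj (f a) * g c * (- (x a * cnj (y c) + x' a * cnj (y' c)) / k)
      = - (cnj (f a) * g c * (x a * cnj (y c) + x' a * cnj (y' c)) / k)" for a c
    by (simp only: minus_divide_left mult_minus_right times_divide_eq_right)
  ultimately show ?thesis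
    by (simp only: sum_negf minus_divide_left sum_divide_distrib[symmetric])
qed

lemma sum_lessThan_add: "(\<Sum>i<m + n. f i) = (\<Sum>i<m. f i) + (\<Sum>i<n. f (m + i))" for m n :: nat
  by (induction n) (simp_all add: add.assoc)

lemma sum_sum_lessThan_double:
  fixes n :: nat
  shows "(\<Sum>a<2*n. \<Sum>b<2*n. F a b) =
     (\<Sum>a<n. \<Sum>b<n. F a b) + (\<Sum>a<n. \<Sum>b<n. F a (n + b)) +
     (\<Sum>a<n. \<Sum>b<n. F (n + a) b) + (\<Sum>a<n. \<Sum>b<n. F (n + a) (n + b))"
  unfolding mult_2 sum_lessThan_add by (simp add: sum.distrib add.assoc)

lemma prod_expect_W_op_eq:
  fixes N :: nat and U :: "nat \<Rightarrow> nat \<Rightarrow> complex" and \<psi> \<phi> :: "nat \<Rightarrow> complex"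
  defines "n \<equiv> 2 * N"
  defines "R \<equiv> {..<n}"
  defines "T \<equiv> cinner R \<phi> (\<lambda>a. cnj (\<psi> a)) * cinner R (\<lambda>c. cnj (\<psi> (n + c))) (\<lambda>c. \<phi> (n + c))
              + cinner R \<phi> (mat_vec R U \<psi>) * cinner R (mat_vec R U (\<lambda>c. \<psi> (n + c))) (\<lambda>c. \<phi> (n + c))"
  shows "prod_expect (4 * N) (W_op N U) \<psi> \<phi> =
    of_real (sqnorm R \<phi> * sqnorm R (\<lambda>c. \<psi> (n + c)) + sqnorm R (\<lambda>c. \<phi> (n + c)) * sqnorm R \<psi> - 2 * Re T)
      / (of_nat n * of_nat (4 * N))"
proof -
  let ?X = "\<lambda>p q. cnj (\<psi> p) * \<psi> q"
  have LL: "(\<Sum>a<n. \<Sum>b<n. cnj (\<phi> a) * \<phi> b * PhiU N U ?X a b)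
      = cinner R \<phi> \<phi> * cinner R (\<lambda>c. \<psi> (n + c)) (\<lambda>c. \<psi> (n + c)) / of_nat n"
    unfolding R_def n_def
    by (subst sum_sum_diagonal[symmetric]) (auto intro!: sum.cong simp: PhiU_rank_one_blocks(1))
  have HH: "(\<Sum>a<n. \<Sum>b<n. cnj (\<phi> (n + a)) * \<phi> (n + b) * PhiU N U ?X (n + a) (n + b))
      = cinner R (\<lambda>c. \<phi> (n + c)) (\<lambda>c. \<phi> (n + c)) * cinner R \<psi> \<psi> / of_nat n"
    unfolding R_def n_def
    by (subst sum_sum_diagonal[symmetric]) (auto intro!: sum.cong simp: PhiU_rank_one_blocks(2))
  have LH: "(\<Sum>a<n. \<Sum>b<n. cnj (\<phi> a) * \<phi> (n + b) * PhiU N U ?X a (n + b)) = - T / of_nat n"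
    unfolding T_def R_def n_def
    by (subst sum_sum_rank_two[symmetric]) (auto intro!: sum.cong simp: PhiU_rank_one_blocks(3))
  have cnj_T: "cnj T = cinner R (\<lambda>c. \<phi> (n + c)) (\<lambda>c. cnj (\<psi> (n + c))) * cinner R (\<lambda>a. cnj (\<psi> a)) \<phi>
      + cinner R (\<lambda>c. \<phi> (n + c)) (mat_vec R U (\<lambda>c. \<psi> (n + c))) * cinner R (mat_vec R U \<psi>) \<phi>"
    unfolding T_def by (simp add: cnj_cinner mult.commute)
  have HL: "(\<Sum>a<n. \<Sum>b<n. cnj (\<phi> (n + a)) * \<phi> b * PhiU N U ?X (n + a) b) = - cnj T / of_nat n"
    unfolding cnj_T R_def n_def
    by (subst sum_sum_rank_two[symmetric]) (auto intro!: sum.cong simp: PhiU_rank_one_blocks(4))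
  have "4 * N = 2 * n"
    unfolding n_def by simp
  have "prod_expect (4 * N) (W_op N U) \<psi> \<phi>
      = (cinner R \<phi> \<phi> * cinner R (\<lambda>c. \<psi> (n + c)) (\<lambda>c. \<psi> (n + c)) + cinner R (\<lambda>c. \<phi> (n + c)) (\<lambda>c. \<phi> (n + c)) * cinner R \<psi> \<psi>
         - (T + cnj T)) / of_nat n / of_nat (4 * N)"
    unfolding prod_expect_W_op unfolding \<open>4 * N = 2 * n\<close> sum_sum_lessThan_double LL HH LH HL
    by (simp add: add_divide_distrib diff_divide_distrib)
  then show ?thesis
    by (simp add: cinner_self complex_add_cnj)
qed

lemma cinner_cnj_mat_vec_antisymmetric:
  assumes "antisymmetric_mat n U"
  shows "cinner {..<n} (\<lambda>a. cnj (v a)) (mat_vec {..<n} U v) = 0"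
proof -
  define S where "S = (\<Sum>a<n. \<Sum>p<n. v a * U a p * v p)"
  have "S = (\<Sum>p<n. \<Sum>a<n. v a * U a p * v p)"
    unfolding S_def by (rule sum.swap)
  also have "\<dots> = (\<Sum>p<n. \<Sum>a<n. - (v p * U p a * v a))"
  proof (intro sum.cong refl)
    fix p a assume "p \<in> {..<n}" "a \<in> {..<n}"
    then have "U a p = - U p a"
      using assms unfolding antisymmetric_mat_def lessThan_iff by blast
    then show "v a * U a p * v p = - (v p * U p a * v a)"
      by (simp add: mult_ac)
  qed
  also have "\<dots> = - S"
    unfolding S_def by (simp add: sum_negf)
  finally have "S = 0" by simp
  then show ?thesis
    unfolding S_def cinner_def mat_vec_def by (simp add: sum_distrib_left mult.assoc)
qed

lemma mat_vec_adjoint_unitary: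
  assumes "unitary_mat n U" and "a < n"
  shows "mat_vec {..<n} (mat_adjoint U) (mat_vec {..<n} U v) a = v a"
proof -
  have "mat_vec {..<n} (mat_adjoint U) (mat_vec {..<n} U v) a
      = (\<Sum>z<n. (\<Sum>y<n. cnj (U y a) * U y z) * v z)"
    unfolding mat_vec_def mat_adjoint_def
    by (simp add: sum_distrib_left sum_distrib_right mult.assoc) (rule sum.swap)
  also have "\<dots> = (\<Sum>z<n. if a = z then v z else 0)"
    using assms unfolding unitary_mat_def by (intro sum.cong refl) simp
  finally show ?thesis
    using assms(2) by simp
qed

lemma sqnorm_mat_vec_unitary:
  assumes "unitary_mat n U"
  shows "sqnorm {..<n} (mat_vec {..<n} U v) = sqnorm {..<n} v"
proof -
  have "cinner {..<n} (mat_vec {..<n} U v) (mat_vec {..<n} U v) = cinner {..<n} v v"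
    unfolding cinner_mat_vec_adjoint using mat_vec_adjoint_unitary[OF assms]
    by (intro cinner_cong_left) simp
  then show ?thesis
    by (simp add: cinner_self)
qed

lemma W_op_block_positive:
  assumes "unitary_mat (2 * N) U" and "antisymmetric_mat (2 * N) U"
  shows "block_positive (4 * N) (W_op N U)"
  unfolding block_positive_iff
proof (intro allI)
  fix \<psi> \<phi> :: "nat \<Rightarrow> complex"
  let ?n = "2 * N"
  let ?R = "{..<?n}"
  let ?\<psi>' = "\<lambda>c. \<psi> (?n + c)"
  have "2 * Re (cinner ?R \<phi> (\<lambda>a. cnj (\<psi> a)) * cinner ?R (\<lambda>c. cnj (?\<psi>' c)) (\<lambda>c. \<phi> (?n + c))
      + cinner ?R \<phi> (mat_vec ?R U \<psi>) * cinner ?R (mat_vec ?R U ?\<psi>') (\<lambda>c. \<phi> (?n + c)))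
    \<le> sqnorm ?R \<phi> * sqnorm ?R (\<lambda>c. cnj (?\<psi>' c)) + sqnorm ?R (\<lambda>c. \<phi> (?n + c)) * sqnorm ?R (\<lambda>a. cnj (\<psi> a))"
    by (intro two_Re_cross_term_le cinner_cnj_mat_vec_antisymmetric[OF assms(2)])
      (simp_all only: finite_lessThan sqnorm_mat_vec_unitary[OF assms(1)] sqnorm_cnj)
  then show "0 \<le> prod_expect (4 * N) (W_op N U) \<psi> \<phi>"
    unfolding prod_expect_W_op_eq sqnorm_cnj by (simp add: less_eq_complex_def)
qed

lemma prod_expect_W_op_conj_eq_0:
  assumes "antisymmetric_mat (2 * N) U"
  shows "prod_expect (4 * N) (W_op N U) \<psi> (\<lambda>a. cnj (\<psi> a)) = 0"
  using cinner_cnj_mat_vec_antisymmetric[OF assms, of \<psi>]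
  by (simp add: prod_expect_W_op_eq cinner_self sqnorm_cnj)

text \<open>On \<open>|0\<rangle>|0\<rangle> + |2N\<rangle>|2N\<rangle>\<close> only the off-diagonal blocks of \<open>\<Phi>\<close> contribute,
  each with \<open>-1/(2N)\<close>.\<close>

lemma W_op_not_psd:
  assumes "N \<ge> 1"
  shows "\<not> psd_op (4 * N) (W_op N U)"
proof
  assume psd: "psd_op (4 * N) (W_op N U)"
  define R where "R = {..<4 * N} \<times> {..<4 * N}"
  define S :: "(nat \<times> nat) set" where "S = {(0, 0), (2 * N, 2 * N)}"
  define v where "v x = (if x \<in> S then 1 else 0 :: complex)" for x
  have "S \<subseteq> R" and "(0, 0) \<noteq> (2 * N, 2 * N)"
    using assms unfolding S_def R_def by auto
  then have "cinner R v (mat_vec R (W_op N U) v) = (\<Sum>x\<in>S. \<Sum>y\<in>S. W_op N U x y)"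
    unfolding cinner_def mat_vec_def v_def R_def
    by (simp add: if_distrib[of cnj] if_distrib[of "\<lambda>t. t * _"] if_distrib[of "\<lambda>t. _ * t"]
        sum.inter_restrict[symmetric] Int_absorb1 cong: if_cong)
  also have "\<dots> = - 2 / (of_nat (2 * N) * of_nat (4 * N))"
    using assms \<open>(0, 0) \<noteq> (2 * N, 2 * N)\<close>
    unfolding S_def W_op_def PhiU_def mat_unit_def Let_def by (simp add: field_simps)
  finally have "Re (cinner R v (mat_vec R (W_op N U) v)) < 0"
    using assms by (simp add: Re_divide)
  moreover have "0 \<le> cinner R v (mat_vec R (W_op N U) v)"
    using psd unfolding psd_op_iff R_def by blast
  ultimately show False
    by (simp add: less_eq_complex_def)
qed

theorem proposition3:
  fixes N :: nat and U :: "nat \<Rightarrow> nat \<Rightarrow> complex"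
  assumes "N \<ge> 1"
    and "unitary_mat (2 * N) U"
    and "antisymmetric_mat (2 * N) U"
  shows "optimal_entanglement_witness (4 * N) (W_op N U)"
proof -
  have "\<not> nonzero_op (4 * N) A"
    if "psd_op (4 * N) A" and "block_positive (4 * N) (\<lambda>x y. W_op N U x y - A x y)" for A
  proof (rule psd_op_eq_0_if_conj_products_nonpos[OF that(1)])
    fix \<psi> :: "nat \<Rightarrow> complex"
    have "0 \<le> prod_expect (4 * N) (\<lambda>x y. W_op N U x y - A x y) \<psi> (\<lambda>a. cnj (\<psi> a))"
      using that(2) unfolding block_positive_iff by blast
    then show "prod_expect (4 * N) A \<psi> (\<lambda>a. cnj (\<psi> a)) \<le> 0"
      by (simp add: prod_expect_diff prod_expect_W_op_conj_eq_0[OF assms(3)])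
  qed
  then show ?thesis
    unfolding optimal_entanglement_witness_def entanglement_witness_def
    using W_op_block_positive[OF assms(2,3)] W_op_not_psd[OF assms(1)] by blast
qed

end
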